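(* Let $\phi$ be the real root of $x^3=x^2+x+1$. Let $\langle a_i\rangle_{i=1}^\infty$ be a sequence of integers, not identically zero, with $a_i=a_{i+1}+a_{i+2}+a_{i+3}$ for all $i\ge 1$ and $a_1=0$. Then for every integer $n\ge 2$, either $|a_n|>0.01\phi^{n/2}$ or $|a_{n+1}|>0.01\phi^{(n+1)/2}$ (or both). *)

theory Defs
  imports Complex_Main
begin

end

theory Submission
  imports Defs
begin

(* Read forward, the recurrence is b (k + 3) = b k - b (k + 1) - b (k + 2) with b k = a (k + 1);
   its characteristic roots are 1/\<phi> and a complex pair of modulus sqrt \<phi>.  Hence the state
   (b k, b (k + 1), b (k + 2)) carries a quadratic form G that each step multiplies by \<phi> and a
   linear form L that each step divides by \<phi>.  As b 0 = 0 and (b 1, b 2) is a nonzero integer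
   pair, G is of size about \<phi>^k and L about \<phi>^-k.  Since b (k + 2) is determined by b k,
   b (k + 1) and L, G is also at most a multiple of (b k)^2 + (b (k + 1))^2 + L^2, so
   (b k)^2 + (b (k + 1))^2 \<ge> \<phi>^k / 100 for k \<ge> 1, which the two assumed bounds contradict. *)

lemma tribonacci_constant_bounds:
  fixes \<phi> :: real
  assumes "\<phi>^3 = \<phi>\<^sup>2 + \<phi> + 1"
  shows "183/100 \<le> \<phi>" and "\<phi> \<le> 185/100"
proof -
  have "(\<phi> - 183/100) * ((\<phi> + 83/200)\<^sup>2 + 69335/200000)
      = \<phi>^3 - \<phi>\<^sup>2 - \<phi> - 1 + 50413/1000000"
    by (simp add: power2_eq_square power3_eq_cube field_simps)
  also have "\<dots> > 0" using assms by linarith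
  finally have "0 < \<phi> - 183/100"
    by (rule zero_less_mult_pos2) (simp add: add_nonneg_pos)
  then show "183/100 \<le> \<phi>" by simp
  have "(185/100 - \<phi>) * ((\<phi> + 17/40)\<^sup>2 + 3135/8000)
      = \<phi>\<^sup>2 + \<phi> + 1 - \<phi>^3 + 59125/1000000"
    by (simp add: power2_eq_square power3_eq_cube field_simps)
  also have "\<dots> > 0" using assms by linarith
  finally have "0 < 185/100 - \<phi>"
    by (rule zero_less_mult_pos2) (simp add: add_nonneg_pos)
  then show "\<phi> \<le> 185/100" by simp
qed

lemma tribonacci_constant_sq_bounds:
  fixes \<phi> :: real
  assumes "\<phi>^3 = \<phi>\<^sup>2 + \<phi> + 1"
  shows "33/10 \<le> \<phi>\<^sup>2" and "\<phi>\<^sup>2 \<le> 343/100"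
proof -
  have \<phi>: "183/100 \<le> \<phi>" "\<phi> \<le> 185/100" using tribonacci_constant_bounds[OF assms] by simp_all
  have "(183/100)\<^sup>2 \<le> \<phi>\<^sup>2" "\<phi>\<^sup>2 \<le> (185/100)\<^sup>2" using \<phi> by (intro power_mono; simp)+
  then show "33/10 \<le> \<phi>\<^sup>2" "\<phi>\<^sup>2 \<le> 343/100" by (simp_all add: power2_eq_square)
qed

lemma power2_diff_diff_le:
  fixes a b c :: "'a::linordered_idom"
  shows "(a - b - c)\<^sup>2 \<le> 3 * (a\<^sup>2 + b\<^sup>2 + c\<^sup>2)"
proof -
  have "3 * (a\<^sup>2 + b\<^sup>2 + c\<^sup>2) - (a - b - c)\<^sup>2 = (a + b)\<^sup>2 + (a + c)\<^sup>2 + (b - c)\<^sup>2"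
    by (simp add: power2_eq_square algebra_simps)
  also have "\<dots> \<ge> 0" by simp
  finally show ?thesis by simp
qed

lemma sq_le_of_abs_le_powr_half:
  fixes r \<phi> c :: real
  assumes "0 < \<phi>" "0 \<le> c" and "\<bar>r\<bar> \<le> c * \<phi> powr (real n / 2)"
  shows "r\<^sup>2 \<le> c\<^sup>2 * \<phi> ^ n"
proof -
  have "r\<^sup>2 = \<bar>r\<bar>\<^sup>2" by simp
  also have "\<dots> \<le> (c * \<phi> powr (real n / 2))\<^sup>2" using assms(3) by (intro power_mono) auto
  also have "\<dots> = c\<^sup>2 * \<phi> ^ n"
    using assms(1) by (simp add: power_mult_distrib powr_power powr_realpow)
  finally show ?thesis .
qed

definition reverse_tribonacci :: "(nat \<Rightarrow> 'a::ab_group_add) \<Rightarrow> bool" where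
  "reverse_tribonacci b \<longleftrightarrow> (\<forall>k. b k = b (k + 1) + b (k + 2) + b (k + 3))"

lemma reverse_tribonacci_step:
  assumes "reverse_tribonacci b"
  shows "b (k + 3) = b k - b (k + 1) - b (k + 2)"
proof -
  have "b k = b (k + 1) + b (k + 2) + b (k + 3)"
    using assms unfolding reverse_tribonacci_def by blast
  then show ?thesis by (simp add: algebra_simps)
qed

lemma reverse_tribonacci_of_int:
  "reverse_tribonacci c \<Longrightarrow> reverse_tribonacci (\<lambda>k. of_int (c k) :: 'a::ring_1)"
  unfolding reverse_tribonacci_def by (metis of_int_add)

lemma reverse_tribonacci_eq_0:
  assumes "reverse_tribonacci b" and "b 0 = 0" "b 1 = 0" "b 2 = 0"
  shows "b k = 0"
proof (induction k rule: less_induct)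
  case (less k)
  show ?case
  proof (cases "k < 3")
    case True
    then have "k = 0 \<or> k = 1 \<or> k = 2" by auto
    then show ?thesis using assms by auto
  next
    case False
    then obtain j where "k = j + 3" by (metis add.commute le_Suc_ex not_less)
    then show ?thesis
      using less.IH reverse_tribonacci_step[OF assms(1), of j] by simp
  qed
qed

lemma reverse_tribonacci_int_initial_sq_ge:
  fixes c :: "nat \<Rightarrow> int"
  assumes "reverse_tribonacci c" and "c 0 = 0" and "c k \<noteq> 0"
  shows "1 \<le> (c 1)\<^sup>2 + (c 2)\<^sup>2"
proof -
  have "c 1 \<noteq> 0 \<or> c 2 \<noteq> 0"
    using reverse_tribonacci_eq_0[OF assms(1,2)] assms(3) by blast
  then show ?thesis
    by (smt (verit) zero_le_power2 power2_less_eq_zero_iff zero_less_power2)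
qed

lemma reverse_tribonacci_eigenform_power:
  fixes b :: "nat \<Rightarrow> 'a::ab_group_add" and F :: "'a \<Rightarrow> 'a \<Rightarrow> 'a \<Rightarrow> 'b::monoid_mult"
  assumes eigen: "\<And>x y z. F y z (x - y - z) = c * F x y z"
    and "reverse_tribonacci b"
  shows "F (b k) (b (k + 1)) (b (k + 2)) = c ^ k * F (b 0) (b 1) (b 2)"
proof (induction k)
  case 0
  show ?case by (simp add: numeral_2_eq_2)
next
  case (Suc k)
  have "F (b (Suc k)) (b (Suc k + 1)) (b (Suc k + 2))
      = F (b (k + 1)) (b (k + 2)) (b k - b (k + 1) - b (k + 2))"
    using reverse_tribonacci_step[OF assms(2), of k] by (simp add: numeral_3_eq_3)
  also have "\<dots> = c * F (b k) (b (k + 1)) (b (k + 2))" by (rule eigen)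
  finally show ?case using Suc.IH by (simp add: mult.assoc)
qed

text \<open>
  For the step \<open>(x, y, z) \<mapsto> (y, z, x - y - z)\<close>, \<open>decaying_part\<close> is the left eigenvector for the
  eigenvalue \<open>1/\<phi>\<close>, and \<open>growing_part_sq\<close> is a positive multiple of the squared modulus of a
  left eigenvector for one of the two complex eigenvalues, whose modulus is \<open>sqrt \<phi>\<close>
  (coefficients reduced using \<open>\<phi>^3 = \<phi>\<^sup>2 + \<phi> + 1\<close>).
\<close>

definition growing_part_sq :: "real \<Rightarrow> real \<Rightarrow> real \<Rightarrow> real \<Rightarrow> real" where
  "growing_part_sq \<phi> x y z =
     x\<^sup>2 + (\<phi>\<^sup>2 - 1) * y\<^sup>2 + \<phi> * z\<^sup>2 - (\<phi> + 1) * x * y - (\<phi>\<^sup>2 - \<phi>) * x * z + (\<phi> - 1) * y * z"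

definition decaying_part :: "real \<Rightarrow> real \<Rightarrow> real \<Rightarrow> real \<Rightarrow> real" where
  "decaying_part \<phi> x y z = x + (\<phi> - 1) * y + (\<phi>\<^sup>2 - \<phi> - 1) * z"

lemma growing_part_sq_shift:
  assumes "\<phi>^3 = \<phi>\<^sup>2 + \<phi> + 1"
  shows "growing_part_sq \<phi> y z (x - y - z) = \<phi> * growing_part_sq \<phi> x y z"
  using assms unfolding growing_part_sq_def by algebra

lemma decaying_part_shift:
  assumes "\<phi>^3 = \<phi>\<^sup>2 + \<phi> + 1"
  shows "decaying_part \<phi> y z (x - y - z) = (1 / \<phi>) * decaying_part \<phi> x y z"
proof -
  have "\<phi> * decaying_part \<phi> y z (x - y - z) = decaying_part \<phi> x y z"
    using assms unfolding decaying_part_def by algebra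
  moreover have "\<phi> \<noteq> 0" using assms by auto
  ultimately show ?thesis by (simp add: field_simps)
qed

lemma decaying_part_solve:
  assumes "\<phi>^3 = \<phi>\<^sup>2 + \<phi> + 1"
  shows "z = \<phi> * (decaying_part \<phi> x y z - x - (\<phi> - 1) * y)"
  using assms unfolding decaying_part_def by algebra

lemma growing_part_sq_zero_ge:
  assumes "\<phi>^3 = \<phi>\<^sup>2 + \<phi> + 1"
  shows "7/5 * (u\<^sup>2 + v\<^sup>2) \<le> growing_part_sq \<phi> 0 u v"
proof -
  have \<phi>: "183/100 \<le> \<phi>" "\<phi> \<le> 185/100" using tribonacci_constant_bounds[OF assms] by simp_all
  have \<phi>2: "33/10 \<le> \<phi>\<^sup>2" using tribonacci_constant_sq_bounds[OF assms] by simp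
  have "growing_part_sq \<phi> 0 u v
      = (\<phi>\<^sup>2 - \<phi>/2 - 1/2) * u\<^sup>2 + (\<phi> + 1)/2 * v\<^sup>2 + (\<phi> - 1)/2 * (u + v)\<^sup>2"
    by (simp add: growing_part_sq_def power2_eq_square field_simps)
  moreover have "7/5 * u\<^sup>2 \<le> (\<phi>\<^sup>2 - \<phi>/2 - 1/2) * u\<^sup>2" using \<phi> \<phi>2 by (intro mult_right_mono) auto
  moreover have "7/5 * v\<^sup>2 \<le> (\<phi> + 1)/2 * v\<^sup>2" using \<phi> by (intro mult_right_mono) auto
  moreover have "0 \<le> (\<phi> - 1)/2 * (u + v)\<^sup>2" using \<phi> by simp
  ultimately show ?thesis unfolding distrib_left by linarith
qed

lemma decaying_part_zero_sq_le:
  assumes "\<phi>^3 = \<phi>\<^sup>2 + \<phi> + 1"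
  shows "(decaying_part \<phi> 0 u v)\<^sup>2 \<le> 103/100 * (u\<^sup>2 + v\<^sup>2)"
proof -
  define c d where "c = \<phi> - 1" and "d = \<phi>\<^sup>2 - \<phi> - 1"
  have \<phi>: "183/100 \<le> \<phi>" "\<phi> \<le> 185/100" using tribonacci_constant_bounds[OF assms] by simp_all
  have "\<phi> * d = 1" using assms unfolding d_def by algebra
  then have d_eq: "d = 1 / \<phi>" using \<phi> by (simp add: field_simps)
  have "0 \<le> d" "d \<le> 100/183" unfolding d_eq using \<phi> by (simp_all add: divide_simps)
  then have "d\<^sup>2 \<le> (100/183)\<^sup>2" by (intro power_mono)
  moreover have "c\<^sup>2 \<le> (17/20)\<^sup>2" using \<phi> unfolding c_def by (intro power_mono) auto
  ultimately have cd: "c\<^sup>2 + d\<^sup>2 \<le> 103/100" by (simp add: power2_eq_square)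
  have "(decaying_part \<phi> 0 u v)\<^sup>2 \<le> (c * u + d * v)\<^sup>2 + (c * v - d * u)\<^sup>2"
    by (simp add: decaying_part_def c_def d_def)
  also have "\<dots> = (c\<^sup>2 + d\<^sup>2) * (u\<^sup>2 + v\<^sup>2)" by (simp add: power2_eq_square algebra_simps)
  also have "\<dots> \<le> 103/100 * (u\<^sup>2 + v\<^sup>2)" using cd by (intro mult_right_mono) auto
  finally show ?thesis .
qed

lemma growing_part_sq_le_diagonal:
  assumes "\<phi>^3 = \<phi>\<^sup>2 + \<phi> + 1"
  shows "growing_part_sq \<phi> x y z \<le> 33/10 * x\<^sup>2 + 43/10 * y\<^sup>2 + 31/10 * z\<^sup>2"
proof -
  have \<phi>: "183/100 \<le> \<phi>" "\<phi> \<le> 185/100" using tribonacci_constant_bounds[OF assms] by simp_all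
  have \<phi>2: "\<phi>\<^sup>2 \<le> 343/100" using tribonacci_constant_sq_bounds[OF assms] by simp
  have "33/10 * x\<^sup>2 + 43/10 * y\<^sup>2 + 31/10 * z\<^sup>2 - growing_part_sq \<phi> x y z
      = (23/10 - (\<phi>\<^sup>2 + 1)/2) * x\<^sup>2 + (53/10 - \<phi>\<^sup>2 - \<phi>) * y\<^sup>2
        + (31/10 - (\<phi>\<^sup>2 + 2*\<phi> - 1)/2) * z\<^sup>2
        + (\<phi> + 1)/2 * (x + y)\<^sup>2 + (\<phi>\<^sup>2 - \<phi>)/2 * (x + z)\<^sup>2 + (\<phi> - 1)/2 * (y - z)\<^sup>2"
    by (simp add: growing_part_sq_def power2_eq_square field_simps)
  moreover have "0 \<le> (23/10 - (\<phi>\<^sup>2 + 1)/2) * x\<^sup>2" using \<phi>2 by simp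
  moreover have "0 \<le> (53/10 - \<phi>\<^sup>2 - \<phi>) * y\<^sup>2" using \<phi> \<phi>2 by simp
  moreover have "0 \<le> (31/10 - (\<phi>\<^sup>2 + 2*\<phi> - 1)/2) * z\<^sup>2" using \<phi> \<phi>2 by simp
  moreover have "0 \<le> (\<phi>\<^sup>2 - \<phi>)/2 * (x + z)\<^sup>2"
    using \<phi> by (simp add: power2_eq_square mult_right_mono)
  moreover have "0 \<le> (\<phi> + 1)/2 * (x + y)\<^sup>2" "0 \<le> (\<phi> - 1)/2 * (y - z)\<^sup>2"
    using \<phi> by simp_all
  ultimately show ?thesis by linarith
qed

lemma third_sq_le_decaying_part:
  assumes "\<phi>^3 = \<phi>\<^sup>2 + \<phi> + 1"
  shows "z\<^sup>2 \<le> 103/10 * (x\<^sup>2 + y\<^sup>2 + (decaying_part \<phi> x y z)\<^sup>2)"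
proof -
  define l where "l = decaying_part \<phi> x y z"
  define w where "w = (\<phi> - 1) * y"
  have \<phi>: "183/100 \<le> \<phi>" "\<phi> \<le> 185/100" using tribonacci_constant_bounds[OF assms] by simp_all
  have \<phi>2: "\<phi>\<^sup>2 \<le> 343/100" using tribonacci_constant_sq_bounds[OF assms] by simp
  have "w\<^sup>2 \<le> y\<^sup>2"
    using \<phi> unfolding w_def power_mult_distrib
    by (intro mult_left_le_one_le) (auto simp: power_le_one)
  have "z = \<phi> * (l - x - w)"
    using decaying_part_solve[OF assms, of z x y] by (simp add: l_def w_def)
  then have "z\<^sup>2 = \<phi>\<^sup>2 * (l - x - w)\<^sup>2" by (simp only: power_mult_distrib)
  also have "\<dots> \<le> 343/100 * (3 * (l\<^sup>2 + x\<^sup>2 + w\<^sup>2))"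
    using \<phi>2 power2_diff_diff_le[of l x w] by (intro mult_mono) auto
  finally have "z\<^sup>2 \<le> 1029/100 * (l\<^sup>2 + x\<^sup>2 + w\<^sup>2)" by simp
  then show ?thesis
    using \<open>w\<^sup>2 \<le> y\<^sup>2\<close> zero_le_power2[of x] zero_le_power2[of y] zero_le_power2[of l]
    unfolding l_def distrib_left by linarith
qed

lemma growing_part_sq_le:
  assumes "\<phi>^3 = \<phi>\<^sup>2 + \<phi> + 1"
  shows "growing_part_sq \<phi> x y z \<le> 37 * (x\<^sup>2 + y\<^sup>2) + 32 * (decaying_part \<phi> x y z)\<^sup>2"
  using growing_part_sq_le_diagonal[OF assms, of x y z]
    third_sq_le_decaying_part[OF assms, of z x y]
    zero_le_power2[of x] zero_le_power2[of y] zero_le_power2[of "decaying_part \<phi> x y z"]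
  unfolding distrib_left by linarith

lemma reverse_tribonacci_decaying_part_le:
  fixes b :: "nat \<Rightarrow> real"
  assumes root: "\<phi>^3 = \<phi>\<^sup>2 + \<phi> + 1" and "reverse_tribonacci b" "b 0 = 0" "2 \<le> k"
  shows "32 * (decaying_part \<phi> (b k) (b (k + 1)) (b (k + 2)))\<^sup>2 \<le> \<phi>^k * ((b 1)\<^sup>2 + (b 2)\<^sup>2)"
proof -
  define S where "S = (b 1)\<^sup>2 + (b 2)\<^sup>2"
  define l where "l = decaying_part \<phi> (b k) (b (k + 1)) (b (k + 2))"
  have \<phi>: "183/100 \<le> \<phi>" using tribonacci_constant_bounds[OF root] by simp
  have "0 \<le> S" unfolding S_def by simp
  have "l = (1 / \<phi>)^k * decaying_part \<phi> 0 (b 1) (b 2)"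
    using reverse_tribonacci_eigenform_power[where F = "decaying_part \<phi>",
        OF decaying_part_shift[OF root]] assms
    unfolding l_def by simp
  then have "(\<phi>^k * l)\<^sup>2 \<le> 103/100 * S"
    using decaying_part_zero_sq_le[OF root] \<phi> by (simp add: S_def power_one_over)
  have "6 \<le> \<phi>^3" using root \<phi> tribonacci_constant_sq_bounds[OF root] by linarith
  then have "6 ^ k \<le> (\<phi>^3) ^ k" by (intro power_mono) auto
  moreover have "36 \<le> (6::real) ^ k"
    using power_increasing[OF assms(4), of "6::real"] by simp
  ultimately have "36 \<le> \<phi>^(3 * k)" by (simp add: power_mult)
  have "(\<phi>^k)\<^sup>2 * (32 * l\<^sup>2) = 32 * (\<phi>^k * l)\<^sup>2" by (simp add: power_mult_distrib)
  also have "\<dots> \<le> 36 * S" using \<open>(\<phi>^k * l)\<^sup>2 \<le> 103/100 * S\<close> \<open>0 \<le> S\<close> by linarith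
  also have "\<dots> \<le> \<phi>^(3 * k) * S" using \<open>36 \<le> \<phi>^(3 * k)\<close> \<open>0 \<le> S\<close> by (rule mult_right_mono)
  also have "\<dots> = (\<phi>^k)\<^sup>2 * (\<phi>^k * S)"
    by (simp add: power_add[symmetric] power_mult[symmetric] mult.assoc)
  finally show ?thesis using \<phi> unfolding l_def S_def by simp
qed

lemma reverse_tribonacci_growth:
  fixes b :: "nat \<Rightarrow> real"
  assumes root: "\<phi>^3 = \<phi>\<^sup>2 + \<phi> + 1" and "reverse_tribonacci b" "b 0 = 0" "2 \<le> k"
  shows "\<phi>^k * ((b 1)\<^sup>2 + (b 2)\<^sup>2) \<le> 100 * ((b k)\<^sup>2 + (b (k + 1))\<^sup>2)"
proof -
  define S where "S = (b 1)\<^sup>2 + (b 2)\<^sup>2"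
  define P where "P = (b k)\<^sup>2 + (b (k + 1))\<^sup>2"
  define l where "l = decaying_part \<phi> (b k) (b (k + 1)) (b (k + 2))"
  have "7/5 * (\<phi>^k * S) \<le> \<phi>^k * growing_part_sq \<phi> 0 (b 1) (b 2)"
    using growing_part_sq_zero_ge[OF root] tribonacci_constant_bounds[OF root]
    unfolding S_def by (simp add: mult.left_commute)
  also have "\<dots> = growing_part_sq \<phi> (b k) (b (k + 1)) (b (k + 2))"
    using reverse_tribonacci_eigenform_power[where F = "growing_part_sq \<phi>",
        OF growing_part_sq_shift[OF root]] assms
    by simp
  also have "\<dots> \<le> 37 * P + 32 * l\<^sup>2"
    unfolding P_def l_def by (rule growing_part_sq_le[OF root])
  also have "\<dots> \<le> 37 * P + \<phi>^k * S"
    using reverse_tribonacci_decaying_part_le[OF assms] unfolding l_def S_def by simp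
  finally have "\<phi>^k * S \<le> 185/2 * P" by linarith
  moreover have "0 \<le> P" unfolding P_def by simp
  ultimately have "\<phi>^k * S \<le> 100 * P" by linarith
  then show ?thesis unfolding S_def P_def .
qed

lemma reverse_tribonacci_consecutive_sq_ge:
  fixes b :: "nat \<Rightarrow> real"
  assumes root: "\<phi>^3 = \<phi>\<^sup>2 + \<phi> + 1" and "reverse_tribonacci b" "b 0 = 0"
    and "1 \<le> (b 1)\<^sup>2 + (b 2)\<^sup>2" and "1 \<le> k"
  shows "\<phi>^k \<le> 100 * ((b k)\<^sup>2 + (b (k + 1))\<^sup>2)"
proof (cases "k = 1")
  case True
  then show ?thesis
    using assms(4) tribonacci_constant_bounds[OF root] by (simp add: numeral_2_eq_2)
next
  case False
  then have "\<phi>^k * 1 \<le> \<phi>^k * ((b 1)\<^sup>2 + (b 2)\<^sup>2)"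
    using assms(4) tribonacci_constant_bounds[OF root] by (intro mult_left_mono) auto
  also have "\<dots> \<le> 100 * ((b k)\<^sup>2 + (b (k + 1))\<^sup>2)"
    using False assms(5) by (intro reverse_tribonacci_growth[OF root assms(2,3)]) simp
  finally show ?thesis by simp
qed

lemma reverse_tribonacci_int_consecutive_sq_ge:
  fixes c :: "nat \<Rightarrow> int"
  assumes root: "\<phi>^3 = \<phi>\<^sup>2 + \<phi> + 1" and "reverse_tribonacci c" "c 0 = 0" "c j \<noteq> 0"
    and "1 \<le> k"
  shows "\<phi>^k \<le> 100 * ((real_of_int (c k))\<^sup>2 + (real_of_int (c (k + 1)))\<^sup>2)"
proof -
  have "1 \<le> (c 1)\<^sup>2 + (c 2)\<^sup>2" using reverse_tribonacci_int_initial_sq_ge assms(2-4) by blast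
  then have "1 \<le> (real_of_int (c 1))\<^sup>2 + (real_of_int (c 2))\<^sup>2"
    by (metis of_int_le_iff of_int_add of_int_power of_int_1)
  then show ?thesis
    using reverse_tribonacci_consecutive_sq_ge[OF root reverse_tribonacci_of_int[OF assms(2)]]
      assms(3,5)
    by simp
qed

theorem corollary1:
  fixes \<phi> :: real and a :: "nat \<Rightarrow> int" and n :: nat
  assumes phi_root: "\<phi> ^ 3 = \<phi> ^ 2 + \<phi> + 1"
    and nonzero: "\<exists>i\<ge>1. a i \<noteq> 0"
    and rec: "\<And>i. i \<ge> 1 \<Longrightarrow> a i = a (i + 1) + a (i + 2) + a (i + 3)"
    and a1: "a 1 = 0"
    and n2: "n \<ge> 2"
  shows "\<bar>real_of_int (a n)\<bar> > 0.01 * \<phi> powr (real n / 2)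
       \<or> \<bar>real_of_int (a (n + 1))\<bar> > 0.01 * \<phi> powr (real (n + 1) / 2)"
proof (rule ccontr)
  assume "\<not> ?thesis"
  then have small: "\<bar>real_of_int (a n)\<bar> \<le> 0.01 * \<phi> powr (real n / 2)"
      "\<bar>real_of_int (a (n + 1))\<bar> \<le> 0.01 * \<phi> powr (real (n + 1) / 2)" by auto
  define c where "c k = a (k + 1)" for k
  have \<phi>: "183/100 \<le> \<phi>" "\<phi> \<le> 185/100" "\<phi>\<^sup>2 \<le> 343/100"
    using tribonacci_constant_bounds[OF phi_root] tribonacci_constant_sq_bounds[OF phi_root]
    by simp_all
  have "reverse_tribonacci c" unfolding reverse_tribonacci_def
  proof
    fix j
    show "c j = c (j + 1) + c (j + 2) + c (j + 3)"
      using rec[of "j + 1"] by (simp add: c_def add.assoc)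
  qed
  moreover obtain i where "i \<ge> 1" "a i \<noteq> 0" using nonzero by blast
  ultimately have "\<phi>^(n - 1) \<le> 100 * ((real_of_int (a n))\<^sup>2 + (real_of_int (a (n + 1)))\<^sup>2)"
    using reverse_tribonacci_int_consecutive_sq_ge[OF phi_root, of c "i - 1" "n - 1"] a1 n2
    by (simp add: c_def)
  also have "\<dots> \<le> 100 * (0.01\<^sup>2 * \<phi>^n + 0.01\<^sup>2 * \<phi>^(n + 1))"
    using sq_le_of_abs_le_powr_half[OF _ _ small(1)] sq_le_of_abs_le_powr_half[OF _ _ small(2)] \<phi>
    by simp
  also have "\<dots> = \<phi>^(n - 1) * ((\<phi> + \<phi>\<^sup>2) / 100)"
    using n2 by (simp add: power_add power2_eq_square algebra_simps flip: power_Suc)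
  finally have "\<phi>^(n - 1) * 1 \<le> \<phi>^(n - 1) * ((\<phi> + \<phi>\<^sup>2) / 100)" by simp
  then show False using \<phi> by (simp add: mult_le_cancel_left_pos)
qed

end
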